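(* Let $\delta>0$ and $x_0>0$. Call a pair $(x(\cdot),y(\cdot))$ admissible if $y:[0,\infty)\to(0,\infty)$ is Lebesgue measurable and locally bounded and $x:[0,\infty)\to\mathbb{R}$ is the (locally absolutely continuous, Carathéodory) solution on $[0,\infty)$ of \[ \dot x(t)=x(t)\big(1-x(t)\big)-y(t)x(t),\qquad x(0)=x_0 . \] Then there is a decreasing function $\omega:[0,\infty)\to(0,\infty)$ with $\omega(t)\to 0$ as $t\to\infty$ such that for every admissible pair $(x(\cdot),y(\cdot))$ \[ \int_T^{T'}e^{-\delta t}\big[\ln x(t)+\ln y(t)\big]\,dt<\omega(T)\qquad\text{for all }0\le T<T'. \] *)

theory Defs
  imports "HOL-Analysis.Analysis"
begin

text \<open>It agrees with the ordinary Lebesgue integral for integrable functions and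
  equals minus infinity if only the negative part has infinite integral.\<close>
definition ext_set_integral :: "real set \<Rightarrow> (real \<Rightarrow> real) \<Rightarrow> ereal" where
  "ext_set_integral A f =
     enn2ereal (\<integral>\<^sup>+ t. ennreal (indicator A t * f t) \<partial>lborel)
   - enn2ereal (\<integral>\<^sup>+ t. ennreal (- (indicator A t * f t)) \<partial>lborel)"

definition admissible :: "real \<Rightarrow> (real \<Rightarrow> real) \<Rightarrow> (real \<Rightarrow> real) \<Rightarrow> bool" where
  "admissible x0 x y \<longleftrightarrow>
     (\<forall>t\<ge>0. y t > 0) \<and>
     set_borel_measurable lebesgue {0..} y \<and>
     (\<forall>T\<ge>0. \<exists>B. \<forall>t\<in>{0..T}. \<bar>y t\<bar> \<le> B) \<and>
     (\<forall>t\<ge>0. set_integrable lborel {0..t} (\<lambda>s. x s * (1 - x s) - y s * x s) \<and>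
              x t = x0 + (LINT s:{0..t}|lborel. x s * (1 - x s) - y s * x s))"

end

theory Submission
  imports Defs "HOL-Real_Asymp.Real_Asymp"
begin

text \<open>Since ln x + ln y \<le> x y - 1 and x (1 - x) \<le> 1, the integrand is at most
  -exp (-\<delta> t) x'(t). Integrating by parts, the integral of -exp (-\<delta> t) x'(t) over [T, T']
  is at most exp (-\<delta> T) x(T), because x stays positive and the weight decreases. Finally
  x \<le> max x0 1, since x' \<le> 0 whenever x \<ge> 1; so \<omega> t = (max x0 1 + 1) exp (-\<delta> t) works.\<close>

lemma ext_set_integral_le_set_integral:
  fixes A :: "real set" and f g :: "real \<Rightarrow> real"
  assumes le: "\<And>t. t \<in> A \<Longrightarrow> f t \<le> g t" and g: "set_integrable lborel A g"
  shows "ext_set_integral A f \<le> ereal (LINT t:A|lborel. g t)"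
proof -
  define h where "h t = indicator A t * g t" for t
  have h: "integrable lborel h"
    using g by (simp add: set_integrable_def h_def[abs_def])
  have le_h: "indicator A t * f t \<le> h t" for t
    using le[of t] by (simp add: h_def indicator_def)
  have pos: "(\<integral>\<^sup>+ t. ennreal (indicator A t * f t) \<partial>lborel) \<le> (\<integral>\<^sup>+ t. ennreal (h t) \<partial>lborel)"
    by (intro nn_integral_mono) (simp add: ennreal_leI le_h)
  have neg: "(\<integral>\<^sup>+ t. ennreal (- h t) \<partial>lborel) \<le> (\<integral>\<^sup>+ t. ennreal (- (indicator A t * f t)) \<partial>lborel)"
    by (intro nn_integral_mono) (simp add: ennreal_leI le_h)
  have enn2ereal_finite: "enn2ereal X = ereal (enn2real X)" if "X \<noteq> \<infinity>" for X :: ennreal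
  proof -
    have "X = ennreal (enn2real X)" using that by (simp add: ennreal_enn2real less_top)
    then show ?thesis by (metis enn2ereal_ennreal enn2real_nonneg)
  qed
  have "ext_set_integral A f \<le> enn2ereal (\<integral>\<^sup>+ t. ennreal (h t) \<partial>lborel) - enn2ereal (\<integral>\<^sup>+ t. ennreal (- h t) \<partial>lborel)"
    unfolding ext_set_integral_def
    by (intro ereal_minus_mono) (use pos neg in \<open>simp_all add: less_eq_ennreal.rep_eq\<close>)
  also have "\<dots> = ereal (integral\<^sup>L lborel h)"
    using h unfolding real_integrable_def
    by (simp add: enn2ereal_finite real_lebesgue_integral_def[OF h])
  also have "integral\<^sup>L lborel h = (LINT t:A|lborel. g t)"
    by (simp add: set_lebesgue_integral_def h_def[abs_def])
  finally show ?thesis .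
qed

lemma set_integrable_exp_neg_mult:
  fixes F :: "real \<Rightarrow> real"
  assumes F: "set_integrable lborel S F" and "\<delta> \<ge> 0" "S \<subseteq> {0..}"
  shows "set_integrable lborel S (\<lambda>r. exp (- \<delta> * r) * F r)"
proof (rule set_integrable_bound[OF F])
  have "(\<lambda>r. indicator S r * F r) \<in> borel_measurable lborel"
    using F by (simp add: set_integrable_def borel_measurable_integrable)
  then have "(\<lambda>r. exp (- \<delta> * r) * (indicator S r * F r)) \<in> borel_measurable lborel"
    by measurable
  then show "set_borel_measurable lborel S (\<lambda>r. exp (- \<delta> * r) * F r)"
    unfolding set_borel_measurable_def by (simp add: mult.left_commute)
  show "AE r in lborel. r \<in> S \<longrightarrow> norm (exp (- \<delta> * r) * F r) \<le> norm (F r)"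
  proof (rule AE_I2, rule impI)
    fix r assume "r \<in> S"
    then have "exp (- \<delta> * r) \<le> 1" using assms(2,3) by auto
    then show "norm (exp (- \<delta> * r) * F r) \<le> norm (F r)"
      by (simp add: abs_mult mult_left_le_one_le)
  qed
qed

lemma exp_neg_mult_diff_le:
  fixes \<delta> s u :: real
  assumes "\<delta> \<ge> 0" "0 \<le> s" "s \<le> u"
  shows "exp (- \<delta> * s) - exp (- \<delta> * u) \<le> \<delta> * (u - s)"
proof -
  have "exp (- \<delta> * u) = exp (- \<delta> * s) * exp (- (\<delta> * (u - s)))"
    by (simp flip: exp_add add: algebra_simps)
  also have "\<dots> \<ge> exp (- \<delta> * s) * (1 - \<delta> * (u - s))"
    using exp_ge_add_one_self[of "- (\<delta> * (u - s))"] by (intro mult_left_mono) auto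
  finally have "exp (- \<delta> * s) - exp (- \<delta> * u) \<le> exp (- \<delta> * s) * (\<delta> * (u - s))"
    by (simp add: algebra_simps)
  also have "\<dots> \<le> \<delta> * (u - s)"
    using assms by (intro mult_left_le_one_le) auto
  finally show ?thesis .
qed

lemma le_if_decrements_bounded:
  fixes f g :: "real \<Rightarrow> real" and a b c :: real
  assumes "a \<le> b" "c \<ge> 0"
    and decr: "\<And>s u. a \<le> s \<Longrightarrow> s \<le> u \<Longrightarrow> u \<le> b \<Longrightarrow> - (c * (u - s) * (g u - g s)) \<le> f u - f s"
  shows "f a \<le> f b"
proof (rule ccontr)
  \<comment> \<open>On a uniform partition with n pieces the bounds on the decrements telescope to \<open>K / n\<close>.\<close>
  assume "\<not> f a \<le> f b"
  then have gap: "f a - f b > 0" by simp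
  define K where "K = c * (b - a) * (g b - g a)"
  obtain n :: nat where n: "K / (f a - f b) < n" "1 \<le> n"
  proof -
    obtain m :: nat where "K / (f a - f b) < m" using reals_Archimedean2 by blast
    then show ?thesis using that[of "m + 1"] by simp
  qed
  define h where "h = (b - a) / n"
  define p where "p k = a + real k * h" for k :: nat
  have "0 \<le> h" using assms(1) by (simp add: h_def)
  have step: "p (Suc k) - p k = h" for k
    by (simp add: p_def algebra_simps)
  have p_range: "a \<le> p k \<and> p k \<le> b" if "k \<le> n" for k
  proof -
    have "real k * h \<le> real n * h"
      using that \<open>0 \<le> h\<close> by (intro mult_right_mono) auto
    then show ?thesis using n assms(1) by (simp add: p_def h_def)
  qed
  have "(\<Sum>k<n. - (c * h * (g (p (Suc k)) - g (p k)))) \<le> (\<Sum>k<n. f (p (Suc k)) - f (p k))"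
  proof (intro sum_mono)
    fix k assume "k \<in> {..<n}"
    then show "- (c * h * (g (p (Suc k)) - g (p k))) \<le> f (p (Suc k)) - f (p k)"
      using decr[of "p k" "p (Suc k)"] p_range[of k] p_range[of "Suc k"] step[of k] \<open>0 \<le> h\<close>
      by auto
  qed
  moreover have "p 0 = a" "p n = b"
    using n by (simp_all add: p_def h_def)
  ultimately have "- (c * h * (g b - g a)) \<le> f b - f a"
    using sum_lessThan_telescope[of "\<lambda>k. f (p k)" n] sum_lessThan_telescope[of "\<lambda>k. g (p k)" n]
    by (simp add: sum_negf flip: sum_distrib_left)
  then have "f a - f b \<le> K / n"
    by (simp add: K_def h_def)
  moreover have "K / n < f a - f b"
    using n gap by (simp add: pos_divide_less_eq mult.commute divide_less_eq)
  ultimately show False by simp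
qed

lemma integral_antimono_weight_increment_ge:
  fixes e F x :: "real \<Rightarrow> real"
  assumes "s \<le> u" "0 \<le> x s"
    and eF: "(\<lambda>r. e r * F r) integrable_on {s..u}"
    and F: "F integrable_on {s..u}" and abs_F: "(\<lambda>r. \<bar>F r\<bar>) integrable_on {s..u}"
    and x: "x u - x s = integral {s..u} F"
    and e_antimono: "\<And>r r'. s \<le> r \<Longrightarrow> r \<le> r' \<Longrightarrow> r' \<le> u \<Longrightarrow> e r' \<le> e r"
  shows "e u * x u - e s * x s - (e s - e u) * integral {s..u} (\<lambda>r. \<bar>F r\<bar>)
           \<le> integral {s..u} (\<lambda>r. e r * F r)"
proof -
  have shifted: "(\<lambda>r. (e r - e u) * F r) integrable_on {s..u}"
    using integrable_diff[OF eF integrable_on_cmult_left[OF F, of "e u"]]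
    by (simp add: left_diff_distrib)
  have "- ((e s - e u) * integral {s..u} (\<lambda>r. \<bar>F r\<bar>))
          = integral {s..u} (\<lambda>r. - ((e s - e u) * \<bar>F r\<bar>))"
    by simp
  also have "\<dots> \<le> integral {s..u} (\<lambda>r. (e r - e u) * F r)"
  proof (rule integral_le)
    show "(\<lambda>r. - ((e s - e u) * \<bar>F r\<bar>)) integrable_on {s..u}"
      using integrable_neg[OF integrable_on_cmult_left[OF abs_F, of "e s - e u"]] by simp
    fix r assume "r \<in> {s..u}"
    then have "0 \<le> e r - e u" "e r - e u \<le> e s - e u"
      using e_antimono[of r u] e_antimono[of s r] by auto
    then have "- ((e s - e u) * \<bar>F r\<bar>) \<le> - ((e r - e u) * \<bar>F r\<bar>)"
      by (simp add: mult_right_mono)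
    also have "\<dots> \<le> (e r - e u) * F r"
      using abs_ge_minus_self[of "(e r - e u) * F r"] \<open>0 \<le> e r - e u\<close> by (simp add: abs_mult)
    finally show "- ((e s - e u) * \<bar>F r\<bar>) \<le> (e r - e u) * F r" .
  qed (use shifted in simp)
  also have "\<dots> = integral {s..u} (\<lambda>r. e r * F r) - e u * (x u - x s)"
    using integral_diff[OF eF integrable_on_cmult_left[OF F, of "e u"]] x
    by (simp add: left_diff_distrib)
  finally show ?thesis
    using e_antimono[of s u] \<open>s \<le> u\<close> \<open>0 \<le> x s\<close> mult_right_mono[of "e u" "e s" "x s"]
    by (simp add: algebra_simps)
qed

text \<open>Integration by parts, int e x' = [e x] - int x de \<ge> -e(a) x(a), for an indefinite integral x
  that need not be differentiable: t \<mapsto> int_a^t e F - e(t) x(t) has decrements of second order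
  in the mesh and is therefore increasing.\<close>

lemma integral_antimono_weight_ge:
  fixes e F x :: "real \<Rightarrow> real"
  assumes "a \<le> b" "0 \<le> L" "0 \<le> e b"
    and F: "set_integrable lborel {a..b} F"
    and eF: "(\<lambda>r. e r * F r) integrable_on {a..b}"
    and x: "\<And>s u. a \<le> s \<Longrightarrow> s \<le> u \<Longrightarrow> u \<le> b \<Longrightarrow> x u - x s = integral {s..u} F"
    and x_nonneg: "\<And>t. a \<le> t \<Longrightarrow> t \<le> b \<Longrightarrow> 0 \<le> x t"
    and e_antimono: "\<And>s u. a \<le> s \<Longrightarrow> s \<le> u \<Longrightarrow> u \<le> b \<Longrightarrow> e u \<le> e s"
    and e_lipschitz: "\<And>s u. a \<le> s \<Longrightarrow> s \<le> u \<Longrightarrow> u \<le> b \<Longrightarrow> e s - e u \<le> L * (u - s)"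
  shows "- (e a * x a) \<le> integral {a..b} (\<lambda>r. e r * F r)"
proof -
  have F_on: "F integrable_on {s..u}" and abs_F_on: "(\<lambda>r. \<bar>F r\<bar>) integrable_on {s..u}"
    and eF_on: "(\<lambda>r. e r * F r) integrable_on {s..u}" if "a \<le> s" "u \<le> b" for s u
    using that integrable_on_subinterval[of _ "{a..b}" s u] eF
      set_borel_integral_eq_integral(1)[OF F] set_borel_integral_eq_integral(1)[OF set_integrable_abs[OF F]]
    by auto
  define A where "A t = integral {a..t} (\<lambda>r. \<bar>F r\<bar>)" for t
  define D where "D t = integral {a..t} (\<lambda>r. e r * F r) - e t * x t" for t
  have "D a \<le> D b"
  proof (rule le_if_decrements_bounded[where g = A, OF \<open>a \<le> b\<close> \<open>0 \<le> L\<close>])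
    fix s u assume su: "a \<le> s" "s \<le> u" "u \<le> b"
    have D_diff: "D u - D s = integral {s..u} (\<lambda>r. e r * F r) - (e u * x u - e s * x s)"
      and A_diff: "A u - A s = integral {s..u} (\<lambda>r. \<bar>F r\<bar>)"
      using Henstock_Kurzweil_Integration.integral_combine[where a = a and c = s and b = u and f = "\<lambda>r. e r * F r"]
        Henstock_Kurzweil_Integration.integral_combine[where a = a and c = s and b = u and f = "\<lambda>r. \<bar>F r\<bar>"]
        eF_on[of a u] abs_F_on[of a u] su
      by (simp_all add: D_def A_def)
    have "(e s - e u) * (A u - A s) \<le> L * (u - s) * (A u - A s)"
      using e_lipschitz[OF su] abs_F_on[of s u] su
      by (intro mult_right_mono) (auto simp: A_diff integral_nonneg)
    then show "- (L * (u - s) * (A u - A s)) \<le> D u - D s"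
      using integral_antimono_weight_increment_ge[OF su(2) x_nonneg eF_on F_on abs_F_on x]
        e_antimono su
      by (simp add: D_diff A_diff)
  qed
  then show ?thesis
    using mult_nonneg_nonneg[OF \<open>0 \<le> e b\<close> x_nonneg[of b]] \<open>a \<le> b\<close>
    by (simp add: D_def)
qed

lemma le_if_increments_nonpos_above:
  fixes x F :: "real \<Rightarrow> real"
  assumes "a \<le> b" and cont: "continuous_on {a..b} x" and "x a \<le> M"
    and F: "F integrable_on {a..b}"
    and x: "\<And>s u. a \<le> s \<Longrightarrow> s \<le> u \<Longrightarrow> u \<le> b \<Longrightarrow> x u - x s = integral {s..u} F"
    and nonpos: "\<And>r. a \<le> r \<Longrightarrow> r \<le> b \<Longrightarrow> M \<le> x r \<Longrightarrow> F r \<le> 0"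
  shows "x b \<le> M"
proof (rule ccontr)
  assume "\<not> x b \<le> M"
  then have "M < x b" by simp
  define S where "S = {a..b} \<inter> x -` {..M}"
  have "closed S"
    unfolding S_def by (intro continuous_closed_preimage cont) auto
  moreover have "a \<in> S" "bdd_above S"
    using \<open>a \<le> b\<close> \<open>x a \<le> M\<close> by (auto simp: S_def bdd_above_def)
  ultimately have "Sup S \<in> S"
    using closed_contains_Sup by blast
  define t where "t = Sup S"
  have t: "a \<le> t" "t \<le> b"
    using \<open>Sup S \<in> S\<close> by (auto simp: S_def t_def)
  have above: "M < x r" if "t < r" "r \<le> b" for r
    using that t cSup_upper[OF _ \<open>bdd_above S\<close>, of r] by (force simp: S_def t_def)
  obtain c where c: "t \<le> c" "c \<le> b" "x c = M"
    using IVT'[of x t M b] \<open>Sup S \<in> S\<close> \<open>M < x b\<close> t continuous_on_subset[OF cont, of "{t..b}"]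
    by (force simp: S_def t_def)
  then have "x t = M"
    using above[of c] by force
  have "integral {t..b} F \<le> integral {t..b} (\<lambda>_. 0)"
  proof (rule integral_le)
    show "F integrable_on {t..b}"
      using integrable_on_subinterval[OF F] t by simp
    fix r assume "r \<in> {t..b}"
    then have "M \<le> x r"
      using above[of r] \<open>x t = M\<close> by (cases "r = t") force+
    then show "F r \<le> 0"
      using nonpos \<open>r \<in> {t..b}\<close> t by auto
  qed (rule integrable_0)
  then show False
    using x[of t b] t \<open>x t = M\<close> \<open>M < x b\<close> by simp
qed

lemma pos_if_increments_proportional:
  fixes x g :: "real \<Rightarrow> real"
  assumes "a \<le> b" and cont: "continuous_on {a..b} x" and "0 < x a"
    and xg: "(\<lambda>r. x r * g r) integrable_on {a..b}"
    and x: "\<And>s u. a \<le> s \<Longrightarrow> s \<le> u \<Longrightarrow> u \<le> b \<Longrightarrow> x u - x s = integral {s..u} (\<lambda>r. x r * g r)"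
    and g: "\<And>r. a \<le> r \<Longrightarrow> r \<le> b \<Longrightarrow> \<bar>g r\<bar> \<le> K"
  shows "0 < x b"
proof (rule ccontr)
  assume "\<not> 0 < x b"
  define S where "S = {a..b} \<inter> x -` {..0}"
  have "closed S"
    unfolding S_def by (intro continuous_closed_preimage cont) auto
  moreover have "b \<in> S" "bdd_below S"
    using \<open>a \<le> b\<close> \<open>\<not> 0 < x b\<close> by (auto simp: S_def bdd_below_def)
  ultimately have "Inf S \<in> S"
    using closed_contains_Inf by blast
  define t where "t = Inf S"
  have t: "a \<le> t" "t \<le> b" "x t \<le> 0"
    using \<open>Inf S \<in> S\<close> by (auto simp: S_def t_def)
  have below: "0 < x r" if "a \<le> r" "r < t" for r
    using that t cInf_lower[OF _ \<open>bdd_below S\<close>, of r] by (force simp: S_def t_def)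
  have cont_t: "continuous_on {a..t} x"
    using continuous_on_subset[OF cont] t by auto
  obtain c where "a \<le> c" "c \<le> t" "x c = 0"
    using IVT2'[of x t 0 a] t \<open>0 < x a\<close> cont_t by force
  then have "x t = 0"
    using below[of c] by force
  then have "a < t"
    using \<open>0 < x a\<close> t by (cases "a = t") auto
  have x_nonneg: "0 \<le> x r" if "a \<le> r" "r \<le> t" for r
    using that below[of r] \<open>x t = 0\<close> by (cases "r = t") auto
  \<comment> \<open>Shortly before its first zero, x decays at relative rate at most L, which is too slow
      to bring its maximum m there down to 0.\<close>
  define L where "L = \<bar>K\<bar> + 1"
  have "0 < L" by (simp add: L_def add_nonneg_pos)
  define s where "s = max a (t - 1 / (2 * L))"
  have s: "a \<le> s" "s < t" "t - s \<le> 1 / (2 * L)"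
    using \<open>a < t\<close> \<open>0 < L\<close> by (auto simp: s_def)
  obtain r\<^sub>m where r\<^sub>m: "r\<^sub>m \<in> {s..t}" "\<And>r. r \<in> {s..t} \<Longrightarrow> x r \<le> x r\<^sub>m"
    using continuous_attains_sup[of "{s..t}" x] continuous_on_subset[OF cont_t, of "{s..t}"] s by auto
  define m where "m = x r\<^sub>m"
  have "0 < m"
    using r\<^sub>m(2)[of s] below[of s] s by (simp add: m_def)
  have "m = integral {r\<^sub>m..t} (\<lambda>r. - (x r * g r))"
    using x[of r\<^sub>m t] r\<^sub>m s t \<open>x t = 0\<close> by (simp add: m_def)
  also have "\<dots> \<le> integral {r\<^sub>m..t} (\<lambda>_. L * m)"
  proof (rule integral_le)
    show "(\<lambda>r. - (x r * g r)) integrable_on {r\<^sub>m..t}"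
      using integrable_neg[OF integrable_on_subinterval[OF xg]] r\<^sub>m s t by simp
    fix r assume "r \<in> {r\<^sub>m..t}"
    then have "0 \<le> x r" "x r \<le> m" "\<bar>g r\<bar> \<le> L"
      using x_nonneg[of r] r\<^sub>m(2)[of r] g[of r] r\<^sub>m(1) s t by (auto simp: m_def L_def)
    then have "- (x r * g r) \<le> x r * L"
      using mult_left_mono[of "- g r" L "x r"] by linarith
    also have "\<dots> \<le> L * m"
      using \<open>x r \<le> m\<close> \<open>0 < L\<close> by (simp add: mult.commute)
    finally show "- (x r * g r) \<le> L * m" .
  qed (rule integrable_const_ivl)
  also have "\<dots> = (t - r\<^sub>m) * (L * m)"
    using r\<^sub>m by simp
  also have "\<dots> \<le> 1 / (2 * L) * (L * m)"
    using r\<^sub>m s \<open>0 < L\<close> \<open>0 < m\<close> by (intro mult_right_mono) auto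
  also have "\<dots> = m / 2"
    using \<open>0 < L\<close> by simp
  finally show False
    using \<open>0 < m\<close> by simp
qed

lemma ln_add_ln_le_neg_logistic_harvest:
  fixes x y :: real
  assumes "0 < x" "0 < y"
  shows "ln x + ln y \<le> - (x * (1 - x) - y * x)"
proof -
  have "ln x + ln y = ln (x * y)"
    using assms by (simp add: ln_mult)
  also have "\<dots> \<le> x * y - 1"
    using assms by (intro ln_le_minus_one) simp
  also have "\<dots> \<le> - (x * (1 - x) - y * x)"
    using zero_le_power2[of "x - 1/2"] by (simp add: power2_eq_square algebra_simps)
  finally show ?thesis .
qed

definition growth_rate :: "(real \<Rightarrow> real) \<Rightarrow> (real \<Rightarrow> real) \<Rightarrow> real \<Rightarrow> real" where
  "growth_rate x y t = x t * (1 - x t) - y t * x t"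

context
  fixes x0 :: real and x y :: "real \<Rightarrow> real"
  assumes adm: "admissible x0 x y"
begin

lemma admissible_set_integrable: "0 \<le> t \<Longrightarrow> set_integrable lborel {0..t} (growth_rate x y)"
  using adm by (simp add: admissible_def growth_rate_def[abs_def])

lemma admissible_integrable_on: "0 \<le> t \<Longrightarrow> growth_rate x y integrable_on {0..t}"
  using admissible_set_integrable set_borel_integral_eq_integral(1) by blast

lemma admissible_eq_integral:
  assumes "0 \<le> t"
  shows "x t = x0 + integral {0..t} (growth_rate x y)"
proof -
  have "x t = x0 + (LINT s:{0..t}|lborel. growth_rate x y s)"
    using adm assms by (simp add: admissible_def growth_rate_def)
  then show ?thesis
    using set_borel_integral_eq_integral(2)[OF admissible_set_integrable[OF assms]] by simp
qed

lemma admissible_increment: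
  "0 \<le> s \<Longrightarrow> s \<le> u \<Longrightarrow> x u - x s = integral {s..u} (growth_rate x y)"
  using admissible_eq_integral[of s] admissible_eq_integral[of u] admissible_integrable_on[of u]
    Henstock_Kurzweil_Integration.integral_combine[where a = 0 and c = s and b = u and f = "growth_rate x y"]
  by simp

lemma admissible_continuous_on: "0 \<le> t \<Longrightarrow> continuous_on {0..t} x"
  using indefinite_integral_continuous_1[OF admissible_integrable_on, of t]
  by (subst continuous_on_cong[OF refl admissible_eq_integral]) (auto intro: continuous_intros)

lemma admissible_le_max:
  assumes "0 \<le> t"
  shows "x t \<le> max x0 1"
proof (rule le_if_increments_nonpos_above[where a = 0 and b = t and F = "growth_rate x y"])
  fix r assume "0 \<le> r" "max x0 1 \<le> x r"
  moreover have "0 < y r"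
    using adm \<open>0 \<le> r\<close> by (simp add: admissible_def)
  ultimately show "growth_rate x y r \<le> 0"
    by (simp add: growth_rate_def mult_nonneg_nonpos flip: right_diff_distrib')
qed (use assms admissible_continuous_on admissible_integrable_on admissible_increment
       admissible_eq_integral[of 0] in auto)

lemma admissible_pos:
  assumes "0 < x0" "0 \<le> t"
  shows "0 < x t"
proof -
  obtain B where B: "\<And>r. r \<in> {0..t} \<Longrightarrow> \<bar>y r\<bar> \<le> B"
    using adm \<open>0 \<le> t\<close> unfolding admissible_def by blast
  obtain C where C: "\<And>r. r \<in> {0..t} \<Longrightarrow> \<bar>x r\<bar> \<le> C"
    using compact_imp_bounded[OF compact_continuous_image[OF admissible_continuous_on compact_Icc]]
      \<open>0 \<le> t\<close> by (force simp: bounded_iff)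
  have rate: "growth_rate x y = (\<lambda>r. x r * (1 - x r - y r))"
    by (simp add: growth_rate_def fun_eq_iff algebra_simps)
  show ?thesis
  proof (rule pos_if_increments_proportional[of 0 t x "\<lambda>r. 1 - x r - y r" "1 + C + B"])
    fix r assume "0 \<le> r" "r \<le> t"
    then show "\<bar>1 - x r - y r\<bar> \<le> 1 + C + B"
      using B[of r] C[of r] by auto
  qed (use assms admissible_continuous_on admissible_integrable_on admissible_increment
         admissible_eq_integral[of 0] rate in auto)
qed

lemma admissible_discounted_log_le:
  assumes "0 < x0" "0 \<le> \<delta>" "0 \<le> T" "T \<le> T'"
  shows "ext_set_integral {T..T'} (\<lambda>t. exp (- \<delta> * t) * (ln (x t) + ln (y t)))
           \<le> ereal (exp (- \<delta> * T) * max x0 1)"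
proof -
  define eF where "eF t = exp (- \<delta> * t) * growth_rate x y t" for t
  have F: "set_integrable lborel {T..T'} (growth_rate x y)"
    using set_integrable_subset[OF admissible_set_integrable[of T']] assms by auto
  then have eF: "set_integrable lborel {T..T'} eF"
    unfolding eF_def using set_integrable_exp_neg_mult assms by auto
  have "ext_set_integral {T..T'} (\<lambda>t. exp (- \<delta> * t) * (ln (x t) + ln (y t)))
          \<le> ereal (LINT t:{T..T'}|lborel. - eF t)"
  proof (rule ext_set_integral_le_set_integral)
    fix t assume "t \<in> {T..T'}"
    then have "0 < x t" "0 < y t"
      using admissible_pos[OF \<open>0 < x0\<close>] adm assms by (auto simp: admissible_def)
    then have "ln (x t) + ln (y t) \<le> - growth_rate x y t"
      unfolding growth_rate_def by (rule ln_add_ln_le_neg_logistic_harvest)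
    then have "exp (- \<delta> * t) * (ln (x t) + ln (y t)) \<le> exp (- \<delta> * t) * - growth_rate x y t"
      by (rule mult_left_mono) simp
    then show "exp (- \<delta> * t) * (ln (x t) + ln (y t)) \<le> - eF t"
      by (simp add: eF_def)
  qed (use eF in \<open>simp add: set_integrable_def\<close>)
  also have "(LINT t:{T..T'}|lborel. - eF t) = - integral {T..T'} eF"
    using set_integral_uminus[OF eF] set_borel_integral_eq_integral(2)[OF eF] by simp
  also have "\<dots> \<le> exp (- \<delta> * T) * x T"
  proof -
    have "- (exp (- \<delta> * T) * x T) \<le> integral {T..T'} (\<lambda>r. exp (- \<delta> * r) * growth_rate x y r)"
    proof (rule integral_antimono_weight_ge[OF \<open>T \<le> T'\<close> \<open>0 \<le> \<delta>\<close> _ F])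
      show "(\<lambda>r. exp (- \<delta> * r) * growth_rate x y r) integrable_on {T..T'}"
        using set_borel_integral_eq_integral(1)[OF eF] by (simp add: eF_def[abs_def])
      fix s u assume "T \<le> s" "s \<le> u" "u \<le> T'"
      then show "exp (- \<delta> * u) \<le> exp (- \<delta> * s)"
        and "exp (- \<delta> * s) - exp (- \<delta> * u) \<le> \<delta> * (u - s)"
        using assms exp_neg_mult_diff_le[of \<delta> s u] by (auto intro: mult_left_mono)
    qed (use assms admissible_increment admissible_pos in \<open>auto intro: less_imp_le\<close>)
    then show ?thesis
      by (simp add: eF_def[abs_def])
  qed
  also have "\<dots> \<le> exp (- \<delta> * T) * max x0 1"
    using admissible_le_max[of T] assms by (intro mult_left_mono) auto
  finally show ?thesis
    by simp
qed

end

theorem lemma7p1: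
  fixes \<delta> x0 :: real
  assumes "\<delta> > 0" and "x0 > 0"
  shows "\<exists>\<omega> :: real \<Rightarrow> real.
           (\<forall>t\<ge>0. \<omega> t > 0) \<and>
           (\<forall>s t. 0 \<le> s \<longrightarrow> s \<le> t \<longrightarrow> \<omega> t \<le> \<omega> s) \<and>
           (\<omega> \<longlongrightarrow> 0) at_top \<and>
           (\<forall>x y. admissible x0 x y \<longrightarrow>
              (\<forall>T T'. 0 \<le> T \<longrightarrow> T < T' \<longrightarrow>
                 ext_set_integral {T..T'} (\<lambda>t. exp (- \<delta> * t) * (ln (x t) + ln (y t)))
                   < ereal (\<omega> T)))"
proof (intro exI conjI allI impI)
  define \<omega> where "\<omega> t = (max x0 1 + 1) * exp (- \<delta> * t)" for t
  show "\<omega> t > 0" for t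
    by (simp add: \<omega>_def add_pos_pos)
  show "\<omega> t \<le> \<omega> s" if "0 \<le> s" "s \<le> t" for s t
    using that \<open>\<delta> > 0\<close> by (simp add: \<omega>_def mult_left_mono add_pos_pos)
  show "(\<omega> \<longlongrightarrow> 0) at_top"
    unfolding \<omega>_def using \<open>\<delta> > 0\<close> by real_asymp
  fix x y :: "real \<Rightarrow> real" and T T' :: real
  assume "admissible x0 x y" "0 \<le> T" "T < T'"
  then have "ext_set_integral {T..T'} (\<lambda>t. exp (- \<delta> * t) * (ln (x t) + ln (y t)))
               \<le> ereal (exp (- \<delta> * T) * max x0 1)"
    using admissible_discounted_log_le \<open>\<delta> > 0\<close> \<open>x0 > 0\<close> by simp
  also have "\<dots> < ereal (\<omega> T)"
    by (simp add: \<omega>_def algebra_simps)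
  finally show "ext_set_integral {T..T'} (\<lambda>t. exp (- \<delta> * t) * (ln (x t) + ln (y t))) < ereal (\<omega> T)" .
qed

end
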